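(* Let $\rho$ be an $n$-qubit pure state, $S\subseteq[n]$ non-empty with $s=|S|$, and $K\ge2$. Let $U=\bigotimes_{i\in S}U_i$ with independent Haar-random $U_i\in U(2)$ (identity outside $S$), and conditioned on $U$ let $\mathbf{Z}_1,\dots,\mathbf{Z}_K\in\{0,1\}^s$ be independent outcomes with distribution $P_U(\mathbf{z})=\operatorname{tr}\big(U\rho U^\dagger(|\mathbf{z}\rangle\langle\mathbf{z}|\otimes\mathbb{I}_{[n]\setminus S})\big)$. Let $$\hat S^{(K)}=\frac{1}{K(K-1)}\sum_{\substack{k,k'=1\\k\ne k'}}^K\mathbb{1}[\mathbf{Z}_k=\mathbf{Z}_{k'}],$$ and set $P_2=\mathbb{E}_U\big[\sum_{\mathbf z}P_U(\mathbf z)^2\big]$, $P_3=\mathbb{E}_U\big[\sum_{\mathbf z}P_U(\mathbf z)^3\big]$, $P_{2,2}=\mathbb{E}_U\big[\big(\sum_{\mathbf z}P_U(\mathbf z)^2\big)^2\big]$. Then $$\operatorname{Var}[\hat S^{(K)}]=\frac{2P_2(1-P_2)+4(K-2)(P_3-P_2^2)}{K(K-1)}+\frac{(K-2)(K-3)(P_{2,2}-P_2^2)}{K(K-1)},$$ where the variance is over both the random unitary and the measurement outcomes.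
   Context: $[n]=\{1,\dots,n\}$ labels the qubits; $\mathbb{1}[A]$ is $1$ if $A$ holds and $0$ otherwise. *)

theory Defs
  imports "HOL-Probability.Probability"
begin

type_synonym mat2 = "bool \<Rightarrow> bool \<Rightarrow> complex"

definition mmult2 :: "mat2 \<Rightarrow> mat2 \<Rightarrow> mat2" where
  "mmult2 A B = (\<lambda>a b. \<Sum>c\<in>UNIV. A a c * B c b)"

definition unitary2 :: "mat2 set" where
  "unitary2 = {U. \<forall>a b. (\<Sum>c\<in>UNIV. cnj (U c a) * U c b) = (if a = b then 1 else 0)}"

text \<open>mu is the (normalised) Haar measure on U(2): a left-invariant probability
  measure on the Borel sets of U(2). (By uniqueness of Haar measure, this determines mu.)\<close>
definition haar_U2 :: "mat2 measure \<Rightarrow> bool" where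
  "haar_U2 \<mu> \<longleftrightarrow> prob_space \<mu> \<and> space \<mu> = unitary2 \<and>
     sets \<mu> = sets (restrict_space borel unitary2) \<and>
     (\<forall>W\<in>unitary2. distr \<mu> \<mu> (mmult2 W) = \<mu>)"

definition basis :: "nat \<Rightarrow> (nat \<Rightarrow> bool) set" where
  "basis n = {x. \<forall>i. i \<notin> {1..n} \<longrightarrow> \<not> x i}"

type_synonym qmat = "(nat \<Rightarrow> bool) \<Rightarrow> (nat \<Rightarrow> bool) \<Rightarrow> complex"

definition qmult :: "nat \<Rightarrow> qmat \<Rightarrow> qmat \<Rightarrow> qmat" where
  "qmult n A B = (\<lambda>x y. \<Sum>c\<in>basis n. A x c * B c y)"

definition qadj :: "qmat \<Rightarrow> qmat" where
  "qadj A = (\<lambda>x y. cnj (A y x))"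

definition qtrace :: "nat \<Rightarrow> qmat \<Rightarrow> complex" where
  "qtrace n A = (\<Sum>x\<in>basis n. A x x)"

definition pure_state :: "nat \<Rightarrow> qmat \<Rightarrow> bool" where
  "pure_state n \<rho> \<longleftrightarrow> (\<exists>\<psi> :: (nat \<Rightarrow> bool) \<Rightarrow> complex.
      (\<Sum>x\<in>basis n. (cmod (\<psi> x))\<^sup>2) = 1 \<and>
      (\<forall>x\<in>basis n. \<forall>y\<in>basis n. \<rho> x y = \<psi> x * cnj (\<psi> y)))"

definition tensorU :: "nat \<Rightarrow> nat set \<Rightarrow> (nat \<Rightarrow> mat2) \<Rightarrow> qmat" where
  "tensorU n S Us = (\<lambda>x y. (\<Prod>i\<in>S. Us i (x i) (y i)) *
      (\<Prod>i\<in>{1..n} - S. if x i = y i then 1 else 0))"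

definition outcomes :: "nat set \<Rightarrow> (nat \<Rightarrow> bool) set" where
  "outcomes S = {z. \<forall>i. i \<notin> S \<longrightarrow> \<not> z i}"

definition projz :: "nat set \<Rightarrow> (nat \<Rightarrow> bool) \<Rightarrow> qmat" where
  "projz S z = (\<lambda>x y. if x = y \<and> (\<forall>i\<in>S. x i = z i) then 1 else 0)"

definition PU :: "nat \<Rightarrow> nat set \<Rightarrow> qmat \<Rightarrow> (nat \<Rightarrow> mat2) \<Rightarrow> (nat \<Rightarrow> bool) \<Rightarrow> real" where
  "PU n S \<rho> Us z = Re (qtrace n (qmult n (qmult n (qmult n (tensorU n S Us) \<rho>)
       (qadj (tensorU n S Us))) (projz S z)))"

definition Ulaw :: "mat2 measure \<Rightarrow> nat set \<Rightarrow> (nat \<Rightarrow> mat2) measure" where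
  "Ulaw \<mu> S = PiM S (\<lambda>_. \<mu>)"

definition outcome_law :: "nat \<Rightarrow> nat set \<Rightarrow> qmat \<Rightarrow> (nat \<Rightarrow> mat2) \<Rightarrow> (nat \<Rightarrow> bool) measure" where
  "outcome_law n S \<rho> Us = density (count_space (outcomes S)) (\<lambda>z. ennreal (PU n S \<rho> Us z))"

definition joint_law :: "mat2 measure \<Rightarrow> nat \<Rightarrow> nat set \<Rightarrow> qmat \<Rightarrow> nat \<Rightarrow>
    ((nat \<Rightarrow> mat2) \<times> (nat \<Rightarrow> nat \<Rightarrow> bool)) measure" where
  "joint_law \<mu> n S \<rho> K =
     Ulaw \<mu> S \<bind> (\<lambda>Us. distr (PiM {1..K} (\<lambda>_. outcome_law n S \<rho> Us))
        (Ulaw \<mu> S \<Otimes>\<^sub>M PiM {1..K} (\<lambda>_. count_space (outcomes S)))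
        (\<lambda>Zs. (Us, Zs)))"

definition Shat :: "nat \<Rightarrow> (nat \<Rightarrow> nat \<Rightarrow> bool) \<Rightarrow> real" where
  "Shat K Zs = (1 / (real K * (real K - 1))) *
     (\<Sum>k\<in>{1..K}. \<Sum>k'\<in>{1..K} - {k}. if Zs k = Zs k' then 1 else 0)"

definition variance_of :: "'a measure \<Rightarrow> ('a \<Rightarrow> real) \<Rightarrow> real" where
  "variance_of M X = (\<integral>\<omega>. (X \<omega> - (\<integral>\<omega>'. X \<omega>' \<partial>M))\<^sup>2 \<partial>M)"

end

theory Submission
  imports Defs
begin

text \<open>Given \<open>U\<close>, the outcomes are i.i.d. with law \<open>P_U\<close>, and \<open>K (K - 1) Shat\<close> is a sum of collision
  indicators \<open>[Z_a = Z_b]\<close> over ordered pairs \<open>a \<noteq> b\<close>. The conditional mean of the product of two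
  such indicators depends only on how many indices the pairs share: it is \<open>(\<Sum> P_U\<^sup>2)\<^sup>2\<close>,
  \<open>\<Sum> P_U\<^sup>3\<close> or \<open>\<Sum> P_U\<^sup>2\<close> for 0, 1 or 2 shared indices, and a fixed pair has
  \<open>(K - 2)(K - 3)\<close>, \<open>4 (K - 2)\<close> and 2 partners of each kind. This yields the conditional first and
  second moments of the estimator; averaging over \<open>U\<close> and subtracting \<open>P\<^sub>2\<^sup>2\<close> gives the
  formula. The only quantum input is that \<open>P_U\<close> is a probability distribution depending measurably
  on \<open>U\<close>.\<close>

definition iid_expectation :: "nat set \<Rightarrow> 'a set \<Rightarrow> ('a \<Rightarrow> real) \<Rightarrow> ((nat \<Rightarrow> 'a) \<Rightarrow> real) \<Rightarrow> real"
  where "iid_expectation I \<Omega> p F = (\<Sum>Zs\<in>PiE I (\<lambda>_. \<Omega>). (\<Prod>k\<in>I. p (Zs k)) * F Zs)"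

lemma iid_expectation_prod:
  assumes "finite I" "finite \<Omega>"
  shows "iid_expectation I \<Omega> p (\<lambda>Zs. \<Prod>k\<in>I. g k (Zs k)) = (\<Prod>k\<in>I. \<Sum>y\<in>\<Omega>. p y * g k y)"
  using prod_sum_PiE[of I "\<lambda>_. \<Omega>" "\<lambda>k y. p y * g k y"] assms
  by (simp add: iid_expectation_def prod.distrib)

lemma iid_expectation_sum:
  "iid_expectation I \<Omega> p (\<lambda>Zs. \<Sum>j\<in>J. F j Zs) = (\<Sum>j\<in>J. iid_expectation I \<Omega> p (F j))"
  unfolding iid_expectation_def by (simp add: sum_distrib_left sum.swap[of _ J])

lemma iid_expectation_cmult:
  "iid_expectation I \<Omega> p (\<lambda>Zs. c * F Zs) = c * iid_expectation I \<Omega> p F"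
  unfolding iid_expectation_def by (simp add: sum_distrib_left algebra_simps)

lemma iid_expectation_cong:
  "(\<And>Zs. Zs \<in> PiE I (\<lambda>_. \<Omega>) \<Longrightarrow> F Zs = G Zs) \<Longrightarrow> iid_expectation I \<Omega> p F = iid_expectation I \<Omega> p G"
  unfolding iid_expectation_def by (auto intro!: sum.cong)

lemma iid_expectation_const:
  assumes "finite I" "finite \<Omega>" "(\<Sum>y\<in>\<Omega>. p y) = 1"
  shows "iid_expectation I \<Omega> p (\<lambda>_. c) = c"
  using iid_expectation_prod[OF assms(1,2), of p "\<lambda>_ _. 1"] assms(3)
  by (simp add: iid_expectation_def sum_distrib_right[symmetric])

lemma iid_expectation_centered_square:
  assumes "finite I" "finite \<Omega>" "(\<Sum>y\<in>\<Omega>. p y) = 1"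
  shows "iid_expectation I \<Omega> p (\<lambda>Zs. (F Zs - m)\<^sup>2) =
    iid_expectation I \<Omega> p (\<lambda>Zs. (F Zs)\<^sup>2) - 2 * m * iid_expectation I \<Omega> p F + m\<^sup>2"
proof -
  have "iid_expectation I \<Omega> p (\<lambda>Zs. (F Zs - m)\<^sup>2) =
    iid_expectation I \<Omega> p (\<lambda>Zs. (F Zs)\<^sup>2) - 2 * m * iid_expectation I \<Omega> p F
      + iid_expectation I \<Omega> p (\<lambda>_. m\<^sup>2)"
    unfolding iid_expectation_def
    by (simp add: power2_diff sum_subtractf sum.distrib sum_distrib_left algebra_simps)
  then show ?thesis using iid_expectation_const[OF assms] by simp
qed

text \<open>\<open>\<Prod>k\<in>I. pin_factor A z k (Zs k)\<close> is the indicator that all draws indexed by \<open>A\<close> equal \<open>z\<close>;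
  summing it over \<open>z\<close> turns a collision indicator into sums of products of single-draw factors.\<close>

definition pin_factor :: "nat set \<Rightarrow> 'a \<Rightarrow> nat \<Rightarrow> 'a \<Rightarrow> real"
  where "pin_factor A z k y = (if k \<in> A then of_bool (y = z) else 1)"

lemma collision_indicator_eq_sum_pinned:
  assumes "finite I" "finite \<Omega>" "Zs \<in> PiE I (\<lambda>_. \<Omega>)" "a \<in> I" "b \<in> I" "a \<noteq> b"
  shows "of_bool (Zs a = Zs b) = (\<Sum>z\<in>\<Omega>. \<Prod>k\<in>I. pin_factor {a, b} z k (Zs k))"
proof -
  have "(\<Prod>k\<in>I. pin_factor {a, b} z k (Zs k)) = of_bool (Zs a = z) * of_bool (Zs b = z)" for z
  proof -
    have "(\<Prod>k\<in>I. pin_factor {a, b} z k (Zs k)) = (\<Prod>k\<in>I \<inter> {k. k \<in> {a, b}}. of_bool (Zs k = z))"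
      unfolding pin_factor_def using assms(1) by (simp add: prod.If_cases)
    also have "I \<inter> {k. k \<in> {a, b}} = {a, b}" using assms by auto
    finally show ?thesis using assms(6) by simp
  qed
  then have "(\<Sum>z\<in>\<Omega>. \<Prod>k\<in>I. pin_factor {a, b} z k (Zs k)) =
      (\<Sum>z\<in>\<Omega>. if z = Zs a then of_bool (Zs b = Zs a) else 0)"
    by (intro sum.cong) auto
  also have "\<dots> = of_bool (Zs a = Zs b)"
    using assms PiE_mem[OF assms(3,4)] by (auto simp: sum.delta)
  finally show ?thesis by simp
qed

lemma sum_pin_factor_pair:
  assumes "finite \<Omega>" "z \<in> \<Omega>" "w \<in> \<Omega>" "(\<Sum>y\<in>\<Omega>. p y) = 1"
  shows "(\<Sum>y\<in>\<Omega>. p y * (pin_factor A z k y * pin_factor B w k y)) =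
    (if k \<in> A then (if k \<in> B then (if z = w then p z else 0) else p z)
     else (if k \<in> B then p w else 1))"
proof -
  have "p y * (pin_factor A z k y * pin_factor B w k y) =
    (if k \<in> A then (if k \<in> B then (if y = z then (if z = w then p z else 0) else 0)
                     else (if y = z then p z else 0))
     else (if k \<in> B then (if y = w then p w else 0) else p y))" for y
    unfolding pin_factor_def by auto
  then show ?thesis using assms by (simp add: sum.delta)
qed

lemma prod_if_two_sets:
  fixes \<alpha> \<beta> \<gamma> :: real
  assumes "finite I" "A \<subseteq> I" "B \<subseteq> I"
  shows "(\<Prod>k\<in>I. if k \<in> A then (if k \<in> B then \<alpha> else \<beta>) else (if k \<in> B then \<gamma> else 1)) =
     \<alpha> ^ card (A \<inter> B) * \<beta> ^ card (A - B) * \<gamma> ^ card (B - A)"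
proof -
  have "finite A" "finite B" using assms finite_subset by auto
  have "(\<Prod>k\<in>I. if k \<in> A then (if k \<in> B then \<alpha> else \<beta>) else (if k \<in> B then \<gamma> else 1)) =
     (\<Prod>k\<in>I \<inter> {k. k \<in> A}. if k \<in> B then \<alpha> else \<beta>) * (\<Prod>k\<in>I \<inter> - {k. k \<in> A}. if k \<in> B then \<gamma> else 1)"
    using assms(1) by (rule prod.If_cases)
  also have "I \<inter> {k. k \<in> A} = A" using assms by auto
  also have "(\<Prod>k\<in>A. if k \<in> B then \<alpha> else \<beta>) = \<alpha> ^ card (A \<inter> B) * \<beta> ^ card (A - B)"
    using \<open>finite A\<close> by (simp add: prod.If_cases Int_def set_diff_eq Collect_conj_eq[symmetric])
  also have "(\<Prod>k\<in>I \<inter> - {k. k \<in> A}. if k \<in> B then \<gamma> else 1) = (\<Prod>k\<in>I \<inter> - {k. k \<in> A} \<inter> {k. k \<in> B}. \<gamma>)"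
    using assms(1) by (simp add: prod.If_cases)
  also have "I \<inter> - {k. k \<in> A} \<inter> {k. k \<in> B} = B - A" using assms by auto
  finally show ?thesis by simp
qed

lemma iid_expectation_collision_pair:
  assumes I: "finite I" and \<Omega>: "finite \<Omega>" and p1: "(\<Sum>y\<in>\<Omega>. p y) = 1"
    and abcd: "a \<in> I" "b \<in> I" "c \<in> I" "d \<in> I" "a \<noteq> b" "c \<noteq> d"
  defines "m \<equiv> card ({a, b} \<inter> {c, d})"
  shows "iid_expectation I \<Omega> p (\<lambda>Zs. of_bool (Zs a = Zs b) * of_bool (Zs c = Zs d)) =
    (if m = 0 then (\<Sum>z\<in>\<Omega>. p z ^ 2)\<^sup>2 else if m = 1 then \<Sum>z\<in>\<Omega>. p z ^ 3 else \<Sum>z\<in>\<Omega>. p z ^ 2)"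
proof -
  define A B where "A = {a, b}" and "B = {c, d}"
  have AB: "A \<subseteq> I" "B \<subseteq> I" using abcd by (auto simp: A_def B_def)
  have card_diff: "card (A - B) = 2 - m" "card (B - A) = 2 - m"
    using abcd by (auto simp: m_def A_def B_def card_Diff_subset_Int Int_commute)
  have card_Int: "card (A \<inter> B) = m" by (simp add: m_def A_def B_def)
  have "m \<le> 2" using card_mono[of "{a, b}" "{a, b} \<inter> {c, d}"] abcd(5) by (simp add: m_def)
  have "iid_expectation I \<Omega> p (\<lambda>Zs. of_bool (Zs a = Zs b) * of_bool (Zs c = Zs d)) =
     iid_expectation I \<Omega> p (\<lambda>Zs. \<Sum>z\<in>\<Omega>. \<Sum>w\<in>\<Omega>. \<Prod>k\<in>I. pin_factor A z k (Zs k) * pin_factor B w k (Zs k))"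
    using collision_indicator_eq_sum_pinned[OF I \<Omega> _ abcd(1,2,5)]
      collision_indicator_eq_sum_pinned[OF I \<Omega> _ abcd(3,4,6)]
    by (intro iid_expectation_cong) (simp add: A_def B_def sum_product prod.distrib)
  also have "\<dots> = (\<Sum>z\<in>\<Omega>. \<Sum>w\<in>\<Omega>. \<Prod>k\<in>I. \<Sum>y\<in>\<Omega>. p y * (pin_factor A z k y * pin_factor B w k y))"
    using iid_expectation_prod[OF I \<Omega>, of p "\<lambda>k y. pin_factor A _ k y * pin_factor B _ k y"]
    by (simp add: iid_expectation_sum)
  also have "\<dots> = (\<Sum>z\<in>\<Omega>. \<Sum>w\<in>\<Omega>. (if z = w then p z else 0) ^ m * p z ^ (2 - m) * p w ^ (2 - m))"
  proof (intro sum.cong refl)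
    fix z w assume zw: "z \<in> \<Omega>" "w \<in> \<Omega>"
    show "(\<Prod>k\<in>I. \<Sum>y\<in>\<Omega>. p y * (pin_factor A z k y * pin_factor B w k y)) =
        (if z = w then p z else 0) ^ m * p z ^ (2 - m) * p w ^ (2 - m)"
      unfolding sum_pin_factor_pair[OF \<Omega> zw p1] prod_if_two_sets[OF I AB] card_diff card_Int ..
  qed
  also have "\<dots> = (if m = 0 then (\<Sum>z\<in>\<Omega>. p z ^ 2)\<^sup>2 else if m = 1 then \<Sum>z\<in>\<Omega>. p z ^ 3 else \<Sum>z\<in>\<Omega>. p z ^ 2)"
  proof -
    consider "m = 0" | "m = 1" | "m = 2" using \<open>m \<le> 2\<close> by linarith
    then show ?thesis
    proof cases
      case 1
      then show ?thesis by (simp add: power2_eq_square sum_product)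
    next
      case 2
      then have "(if z = w then p z else 0) ^ m * p z ^ (2 - m) * p w ^ (2 - m) =
          (if w = z then p z ^ 3 else 0)" for z w
        by (auto simp: power3_eq_cube)
      with 2 \<Omega> show ?thesis by (simp add: sum.delta')
    next
      case 3
      then have "(if z = w then p z else 0) ^ m * p z ^ (2 - m) * p w ^ (2 - m) =
          (if w = z then p z ^ 2 else 0)" for z w
        by auto
      with 3 \<Omega> show ?thesis by (simp add: sum.delta')
    qed
  qed
  finally show ?thesis .
qed

lemma sum_offdiag_one:
  assumes "finite I"
  shows "(\<Sum>c\<in>I. \<Sum>d\<in>I - {c}. 1 :: real) = real (card I) * (real (card I) - 1)"
proof -
  have "(\<Sum>d\<in>I - {c}. 1 :: real) = real (card I) - 1" if "c \<in> I" for c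
    using that card_Diff_singleton[OF that] card_gt_0_iff[of I] assms by (auto simp: of_nat_diff)
  then show ?thesis by simp
qed

lemma sum_offdiag_indicator_fst:
  assumes "finite I" "x \<in> I"
  shows "(\<Sum>c\<in>I. \<Sum>d\<in>I - {c}. of_bool (x = c) :: real) = real (card I) - 1"
proof -
  have "(\<Sum>c\<in>I. \<Sum>d\<in>I - {c}. of_bool (x = c) :: real) = real (card (I - {x}))"
    using assms by (simp add: sum.delta)
  then show ?thesis
    using assms card_Diff_singleton[OF assms(2)] card_gt_0_iff[of I] by (auto simp: of_nat_diff)
qed

lemma sum_offdiag_indicator_snd:
  assumes "finite I" "x \<in> I"
  shows "(\<Sum>c\<in>I. \<Sum>d\<in>I - {c}. of_bool (x = d) :: real) = real (card I) - 1"
proof -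
  have "(\<Sum>c\<in>I. \<Sum>d\<in>I - {c}. of_bool (x = d) :: real) = (\<Sum>c\<in>I. 1 - of_bool (x = c))"
    using assms by (intro sum.cong refl) (auto simp: sum.delta)
  then show ?thesis using assms by (simp add: sum_subtractf sum.delta)
qed

lemma sum_offdiag_indicator_pair:
  assumes "finite I" "x \<in> I" "y \<in> I" "x \<noteq> y"
  shows "(\<Sum>c\<in>I. \<Sum>d\<in>I - {c}. of_bool (x = c) * of_bool (y = d) :: real) = 1"
proof -
  have "(\<Sum>c\<in>I. \<Sum>d\<in>I - {c}. of_bool (x = c) * of_bool (y = d) :: real) =
      (\<Sum>c\<in>I. if x = c then \<Sum>d\<in>I - {c}. if y = d then 1 else 0 else 0)"
    by (intro sum.cong refl) (auto simp: of_bool_def)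
  then show ?thesis using assms by (simp add: sum.delta)
qed

text \<open>Since the overlap is at most 2, any \<open>g\<close> is interpolated by an affine function of the overlap
  and of the indicator that it is 2; both are sums of coincidence indicators of single indices.\<close>

lemma overlap_interpolation:
  fixes g :: "nat \<Rightarrow> real"
  assumes "a \<noteq> b" "c \<noteq> d"
  shows "g (card ({a, b} \<inter> {c, d})) = g 0
    + (of_bool (a = c) + of_bool (a = d) + of_bool (b = c) + of_bool (b = d)) * (g 1 - g 0)
    + (of_bool (a = c) * of_bool (b = d) + of_bool (a = d) * of_bool (b = c)) * (g 2 - 2 * g 1 + g 0)"
  using assms by (cases "a = c"; cases "a = d"; cases "b = c"; cases "b = d")
    (simp_all add: insert_commute numeral_2_eq_2)

lemma sum_offdiag_overlap:
  fixes g :: "nat \<Rightarrow> real"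
  assumes I: "finite I" and ab: "a \<in> I" "b \<in> I" "a \<noteq> b"
  shows "(\<Sum>c\<in>I. \<Sum>d\<in>I - {c}. g (card ({a, b} \<inter> {c, d}))) =
    2 * g 2 + 4 * (real (card I) - 2) * g 1 + (real (card I) - 2) * (real (card I) - 3) * g 0"
proof -
  let ?offdiag = "\<lambda>f. \<Sum>c\<in>I. \<Sum>d\<in>I - {c}. f c d :: real"
  let ?overlap1 = "\<lambda>c d. of_bool (a = c) + of_bool (a = d) + of_bool (b = c) + of_bool (b = d)"
  let ?overlap2 = "\<lambda>c d. of_bool (a = c) * of_bool (b = d) + of_bool (b = c) * of_bool (a = d)"
  have "?offdiag (\<lambda>c d. g (card ({a, b} \<inter> {c, d}))) =
      ?offdiag (\<lambda>c d. g 0 * 1 + (g 1 - g 0) * ?overlap1 c d + (g 2 - 2 * g 1 + g 0) * ?overlap2 c d)"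
  proof (intro sum.cong refl)
    fix c d assume "d \<in> I - {c}"
    then have "c \<noteq> d" by auto
    then show "g (card ({a, b} \<inter> {c, d})) =
        g 0 * 1 + (g 1 - g 0) * ?overlap1 c d + (g 2 - 2 * g 1 + g 0) * ?overlap2 c d"
      unfolding overlap_interpolation[OF ab(3) \<open>c \<noteq> d\<close>, where g = g] by (simp add: algebra_simps)
  qed
  also have "\<dots> = g 0 * ?offdiag (\<lambda>_ _. 1)
    + (g 1 - g 0) * (?offdiag (\<lambda>c _. of_bool (a = c)) + ?offdiag (\<lambda>_ d. of_bool (a = d))
       + ?offdiag (\<lambda>c _. of_bool (b = c)) + ?offdiag (\<lambda>_ d. of_bool (b = d)))
    + (g 2 - 2 * g 1 + g 0) * (?offdiag (\<lambda>c d. of_bool (a = c) * of_bool (b = d))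
       + ?offdiag (\<lambda>c d. of_bool (b = c) * of_bool (a = d)))"
    by (simp only: sum.distrib sum_distrib_left distrib_left)
  also have "\<dots> = 2 * g 2 + 4 * (real (card I) - 2) * g 1 + (real (card I) - 2) * (real (card I) - 3) * g 0"
    unfolding sum_offdiag_one[OF I]
      sum_offdiag_indicator_fst[OF I ab(1)] sum_offdiag_indicator_fst[OF I ab(2)]
      sum_offdiag_indicator_snd[OF I ab(1)] sum_offdiag_indicator_snd[OF I ab(2)]
      sum_offdiag_indicator_pair[OF I ab] sum_offdiag_indicator_pair[OF I ab(2,1) ab(3)[symmetric]]
    by (simp add: algebra_simps)
  finally show ?thesis .
qed

lemma iid_expectation_collision:
  assumes "finite I" "finite \<Omega>" "(\<Sum>y\<in>\<Omega>. p y) = 1" "a \<in> I" "b \<in> I" "a \<noteq> b"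
  shows "iid_expectation I \<Omega> p (\<lambda>Zs. of_bool (Zs a = Zs b)) = (\<Sum>z\<in>\<Omega>. p z ^ 2)"
  using iid_expectation_collision_pair[OF assms(1-5) assms(4,5,6,6)] assms(6) by (simp flip: of_bool_conj)

lemma Shat_eq_offdiag_sum:
  "Shat K Zs = 1 / (real K * (real K - 1)) * (\<Sum>a\<in>{1..K}. \<Sum>b\<in>{1..K} - {a}. of_bool (Zs a = Zs b))"
  by (simp add: Shat_def of_bool_def)

lemma Shat_bounds:
  assumes "K \<ge> 2"
  shows "0 \<le> Shat K Zs" "Shat K Zs \<le> 1"
proof -
  have "(\<Sum>a\<in>{1..K}. \<Sum>b\<in>{1..K} - {a}. of_bool (Zs a = Zs b)) \<le> (\<Sum>a\<in>{1..K}. \<Sum>b\<in>{1..K} - {a}. 1 :: real)"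
    by (intro sum_mono) auto
  also have "\<dots> = real K * (real K - 1)" using sum_offdiag_one[of "{1..K}"] by simp
  finally show "Shat K Zs \<le> 1" using assms by (simp add: Shat_eq_offdiag_sum)
  show "0 \<le> Shat K Zs" using assms by (simp add: Shat_eq_offdiag_sum sum_nonneg)
qed

lemma iid_expectation_Shat:
  assumes K: "K \<ge> 2" and \<Omega>: "finite \<Omega>" and p1: "(\<Sum>y\<in>\<Omega>. p y) = 1"
  shows "iid_expectation {1..K} \<Omega> p (Shat K) = (\<Sum>z\<in>\<Omega>. p z ^ 2)"
proof -
  define I where "I = {1..K}"
  define N where "N = real K * (real K - 1)"
  have I: "finite I" "card I = K" by (simp_all add: I_def)
  have "iid_expectation I \<Omega> p (Shat K) =
      1 / N * (\<Sum>a\<in>I. \<Sum>b\<in>I - {a}. iid_expectation I \<Omega> p (\<lambda>Zs. of_bool (Zs a = Zs b)))"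
    unfolding Shat_eq_offdiag_sum iid_expectation_cmult iid_expectation_sum I_def N_def ..
  also have "\<dots> = 1 / N * (\<Sum>a\<in>I. \<Sum>b\<in>I - {a}. (\<Sum>z\<in>\<Omega>. p z ^ 2))"
    using iid_expectation_collision[OF I(1) \<Omega> p1] by simp
  also have "\<dots> = (\<Sum>z\<in>\<Omega>. p z ^ 2)"
    using sum_offdiag_one[OF I(1)] K by (simp add: I(2) N_def)
  finally show ?thesis by (simp add: I_def)
qed

lemma iid_expectation_Shat_square:
  assumes K: "K \<ge> 2" and \<Omega>: "finite \<Omega>" and p1: "(\<Sum>y\<in>\<Omega>. p y) = 1"
  defines "P2 \<equiv> \<Sum>z\<in>\<Omega>. p z ^ 2" and "P3 \<equiv> \<Sum>z\<in>\<Omega>. p z ^ 3"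
  shows "iid_expectation {1..K} \<Omega> p (\<lambda>Zs. (Shat K Zs)\<^sup>2) =
    (2 * P2 + 4 * (real K - 2) * P3 + (real K - 2) * (real K - 3) * P2\<^sup>2) / (real K * (real K - 1))"
proof -
  define I where "I = {1..K}"
  define N where "N = real K * (real K - 1)"
  define g where "g m = (if m = 0 then P2\<^sup>2 else if m = 1 then P3 else P2)" for m :: nat
  have I: "finite I" "card I = K" by (simp_all add: I_def)
  have "(Shat K Zs)\<^sup>2 = 1 / N\<^sup>2 * (\<Sum>a\<in>I. \<Sum>b\<in>I - {a}. \<Sum>c\<in>I. \<Sum>d\<in>I - {c}.
      of_bool (Zs a = Zs b) * of_bool (Zs c = Zs d))" for Zs
    unfolding Shat_eq_offdiag_sum power2_eq_square sum_distrib_right sum_distrib_left I_def N_def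
    by (simp only: mult_ac divide_inverse inverse_mult_distrib mult_1)
  then have "iid_expectation I \<Omega> p (\<lambda>Zs. (Shat K Zs)\<^sup>2) =
      1 / N\<^sup>2 * (\<Sum>a\<in>I. \<Sum>b\<in>I - {a}. \<Sum>c\<in>I. \<Sum>d\<in>I - {c}.
        iid_expectation I \<Omega> p (\<lambda>Zs. of_bool (Zs a = Zs b) * of_bool (Zs c = Zs d)))"
    by (simp only: iid_expectation_cmult iid_expectation_sum)
  also have "\<dots> = 1 / N\<^sup>2 * (\<Sum>a\<in>I. \<Sum>b\<in>I - {a}. \<Sum>c\<in>I. \<Sum>d\<in>I - {c}. g (card ({a, b} \<inter> {c, d})))"
    using iid_expectation_collision_pair[OF I(1) \<Omega> p1] unfolding g_def P2_def P3_def
    by (intro arg_cong[where f = "\<lambda>x. 1 / N\<^sup>2 * x"] sum.cong refl) auto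
  also have "\<dots> = 1 / N\<^sup>2 * (\<Sum>a\<in>I. \<Sum>b\<in>I - {a}.
      2 * P2 + 4 * (real K - 2) * P3 + (real K - 2) * (real K - 3) * P2\<^sup>2)"
    using sum_offdiag_overlap[OF I(1), where g = g] by (simp add: g_def I(2))
  also have "\<dots> = 1 / N\<^sup>2 * ((\<Sum>a\<in>I. \<Sum>b\<in>I - {a}. 1) *
      (2 * P2 + 4 * (real K - 2) * P3 + (real K - 2) * (real K - 3) * P2\<^sup>2))"
    by (simp only: sum_distrib_right mult_1_left)
  also have "\<dots> = 1 / N\<^sup>2 * (N * (2 * P2 + 4 * (real K - 2) * P3 + (real K - 2) * (real K - 3) * P2\<^sup>2))"
    unfolding sum_offdiag_one[OF I(1)] I(2) N_def ..
  also have "\<dots> = (2 * P2 + 4 * (real K - 2) * P3 + (real K - 2) * (real K - 3) * P2\<^sup>2) / N"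
    using K by (simp add: N_def power2_eq_square)
  finally show ?thesis by (simp add: I_def N_def)
qed

lemma finite_vanishing_outside:
  assumes "finite A"
  shows "finite {x :: nat \<Rightarrow> bool. \<forall>i. i \<notin> A \<longrightarrow> \<not> x i}"
proof -
  have "{x. \<forall>i. i \<notin> A \<longrightarrow> \<not> x i} \<subseteq> (\<lambda>B i. i \<in> B) ` Pow A"
  proof
    fix x assume "x \<in> {x. \<forall>i. i \<notin> A \<longrightarrow> \<not> x i}"
    then have "x = (\<lambda>i. i \<in> {i. x i})" "{i. x i} \<in> Pow A" by auto
    then show "x \<in> (\<lambda>B i. i \<in> B) ` Pow A" by blast
  qed
  then show ?thesis using assms finite_subset by blast
qed

lemma finite_basis: "finite (basis n)"
  unfolding basis_def by (rule finite_vanishing_outside) simp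

lemma finite_outcomes: "finite S \<Longrightarrow> finite (outcomes S)"
  unfolding outcomes_def by (rule finite_vanishing_outside)

lemma sum_basis_prod:
  fixes g :: "nat \<Rightarrow> bool \<Rightarrow> 'c::comm_semiring_1"
  shows "(\<Sum>x\<in>basis n. \<Prod>i\<in>{1..n}. g i (x i)) = (\<Prod>i\<in>{1..n}. \<Sum>b\<in>UNIV. g i b)"
proof -
  have "(\<Prod>i\<in>{1..n}. \<Sum>b\<in>UNIV. g i b) = (\<Sum>f\<in>PiE {1..n} (\<lambda>_. UNIV). \<Prod>i\<in>{1..n}. g i (f i))"
    by (intro prod_sum_PiE) auto
  also have "\<dots> = (\<Sum>x\<in>basis n. \<Prod>i\<in>{1..n}. g i (x i))"
    by (rule sum.reindex_bij_witness[of _ "\<lambda>x. restrict x {1..n}" "\<lambda>f i. f i \<and> i \<in> {1..n}"])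
       (auto simp: basis_def PiE_def extensional_def fun_eq_iff)
  finally show ?thesis by simp
qed

lemma tensorU_eq_prod:
  assumes "S \<subseteq> {1..n}"
  shows "tensorU n S Us x c =
    (\<Prod>i\<in>{1..n}. if i \<in> S then Us i (x i) (c i) else of_bool (x i = c i))"
proof -
  have "(\<Prod>i\<in>{1..n}. if i \<in> S then Us i (x i) (c i) else of_bool (x i = c i)) =
     (\<Prod>i\<in>{1..n} \<inter> {i. i \<in> S}. Us i (x i) (c i)) * (\<Prod>i\<in>{1..n} \<inter> - {i. i \<in> S}. of_bool (x i = c i))"
    by (rule prod.If_cases) simp
  also have "{1..n} \<inter> {i. i \<in> S} = S" using assms by auto
  also have "{1..n} \<inter> - {i. i \<in> S} = {1..n} - S" by auto
  finally show ?thesis unfolding tensorU_def by (simp add: of_bool_def)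
qed

lemma unitary2_orthonormal_columns:
  assumes "U \<in> unitary2"
  shows "(\<Sum>b\<in>UNIV. U b a * cnj (U b a')) = of_bool (a = a')"
proof -
  have "(\<Sum>b\<in>UNIV. cnj (U b a) * U b a') = of_bool (a = a')"
    using assms unfolding unitary2_def by simp
  then have "cnj (\<Sum>b\<in>UNIV. cnj (U b a) * U b a') = of_bool (a = a')" by simp
  then show ?thesis by (simp add: cnj_sum)
qed

lemma tensorU_orthonormal_columns:
  assumes S: "S \<subseteq> {1..n}" and U: "\<forall>i\<in>S. Us i \<in> unitary2" and cd: "c \<in> basis n" "d \<in> basis n"
  shows "(\<Sum>x\<in>basis n. tensorU n S Us x c * cnj (tensorU n S Us x d)) = of_bool (c = d)"
proof -
  define u where "u i a b = (if i \<in> S then Us i a b else of_bool (a = b))" for i a b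
  have "(\<Sum>x\<in>basis n. tensorU n S Us x c * cnj (tensorU n S Us x d)) =
      (\<Sum>x\<in>basis n. \<Prod>i\<in>{1..n}. u i (x i) (c i) * cnj (u i (x i) (d i)))"
    unfolding tensorU_eq_prod[OF S] u_def[symmetric] by (simp add: prod.distrib)
  also have "\<dots> = (\<Prod>i\<in>{1..n}. \<Sum>b\<in>UNIV. u i b (c i) * cnj (u i b (d i)))"
    by (rule sum_basis_prod)
  also have "\<dots> = (\<Prod>i\<in>{1..n}. of_bool (c i = d i))"
    using U unitary2_orthonormal_columns by (intro prod.cong refl) (auto simp: u_def UNIV_bool)
  also have "\<dots> = of_bool (c = d)"
  proof (cases "c = d")
    case False
    then obtain j where j: "c j \<noteq> d j" by auto
    then have "j \<in> {1..n}" using cd unfolding basis_def by auto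
    then show ?thesis using j False by (auto intro!: prod_zero)
  qed simp
  finally show ?thesis .
qed

definition evolved_amplitude ::
    "nat \<Rightarrow> nat set \<Rightarrow> (nat \<Rightarrow> mat2) \<Rightarrow> ((nat \<Rightarrow> bool) \<Rightarrow> complex) \<Rightarrow> (nat \<Rightarrow> bool) \<Rightarrow> complex"
  where "evolved_amplitude n S Us \<psi> x = (\<Sum>c\<in>basis n. tensorU n S Us x c * \<psi> c)"

lemma sum_norm_evolved_amplitude:
  assumes "S \<subseteq> {1..n}" "\<forall>i\<in>S. Us i \<in> unitary2"
  shows "(\<Sum>x\<in>basis n. (cmod (evolved_amplitude n S Us \<psi> x))\<^sup>2) = (\<Sum>x\<in>basis n. (cmod (\<psi> x))\<^sup>2)"
proof -
  let ?U = "tensorU n S Us"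
  have "complex_of_real (\<Sum>x\<in>basis n. (cmod (evolved_amplitude n S Us \<psi> x))\<^sup>2) =
      (\<Sum>x\<in>basis n. \<Sum>c\<in>basis n. \<Sum>d\<in>basis n. \<psi> c * cnj (\<psi> d) * (?U x c * cnj (?U x d)))"
    unfolding of_real_sum complex_norm_square evolved_amplitude_def cnj_sum sum_product
    by (intro sum.cong refl) (simp add: mult_ac)
  also have "\<dots> = (\<Sum>c\<in>basis n. \<Sum>d\<in>basis n. \<psi> c * cnj (\<psi> d) * (\<Sum>x\<in>basis n. ?U x c * cnj (?U x d)))"
    unfolding sum_distrib_left by (subst sum.swap) (intro sum.cong refl sum.swap)
  also have "\<dots> = (\<Sum>c\<in>basis n. \<psi> c * cnj (\<psi> c))"
    using finite_basis by (simp add: tensorU_orthonormal_columns[OF assms] if_distrib[of "\<lambda>x. _ * x"] sum.delta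
        cong: if_cong)
  also have "\<dots> = complex_of_real (\<Sum>x\<in>basis n. (cmod (\<psi> x))\<^sup>2)"
    by (simp only: of_real_sum complex_norm_square)
  finally show ?thesis by (simp only: of_real_eq_iff)
qed

lemma PU_eq_sum_evolved_amplitude:
  assumes \<rho>: "\<forall>x\<in>basis n. \<forall>y\<in>basis n. \<rho> x y = \<psi> x * cnj (\<psi> y)"
  shows "PU n S \<rho> Us z =
    (\<Sum>x\<in>basis n. if \<forall>i\<in>S. x i = z i then (cmod (evolved_amplitude n S Us \<psi> x))\<^sup>2 else 0)"
proof -
  let ?U = "tensorU n S Us"
  let ?\<phi> = "evolved_amplitude n S Us \<psi>"
  have U\<rho>: "qmult n ?U \<rho> x d = ?\<phi> x * cnj (\<psi> d)" if "d \<in> basis n" for x d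
    unfolding qmult_def evolved_amplitude_def sum_distrib_right
    using \<rho> that by (intro sum.cong refl) (auto simp: mult.assoc)
  have U\<rho>U: "qmult n (qmult n ?U \<rho>) (qadj ?U) x x = ?\<phi> x * cnj (?\<phi> x)" for x
  proof -
    have "qmult n (qmult n ?U \<rho>) (qadj ?U) x x = (\<Sum>d\<in>basis n. ?\<phi> x * cnj (?U x d * \<psi> d))"
      unfolding qmult_def[of n "qmult n ?U \<rho>"] qadj_def using U\<rho> by (intro sum.cong refl) auto
    then show ?thesis unfolding evolved_amplitude_def[of n S Us \<psi> x] by (simp add: sum_distrib_left)
  qed
  have proj: "qmult n A (projz S z) x x = (if \<forall>i\<in>S. x i = z i then A x x else 0)"
    if "x \<in> basis n" for A x
  proof -
    have "qmult n A (projz S z) x x =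
        (\<Sum>c\<in>basis n. if c = x then (if \<forall>i\<in>S. x i = z i then A x x else 0) else 0)"
      unfolding qmult_def projz_def by (intro sum.cong refl) auto
    then show ?thesis using that finite_basis by (simp add: sum.delta)
  qed
  have "PU n S \<rho> Us z = Re (\<Sum>x\<in>basis n. if \<forall>i\<in>S. x i = z i then ?\<phi> x * cnj (?\<phi> x) else 0)"
    unfolding PU_def qtrace_def by (intro arg_cong[where f = Re] sum.cong refl) (simp add: proj U\<rho>U)
  then show ?thesis
    unfolding Re_sum by (simp add: complex_norm_square[symmetric] if_distrib[of Re] cong: if_cong)
qed

lemma PU_nonneg:
  assumes "\<forall>x\<in>basis n. \<forall>y\<in>basis n. \<rho> x y = \<psi> x * cnj (\<psi> y)"
  shows "PU n S \<rho> Us z \<ge> 0"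
  unfolding PU_eq_sum_evolved_amplitude[OF assms] by (intro sum_nonneg) auto

lemma sum_outcomes_agreeing:
  assumes "finite S"
  shows "(\<Sum>z\<in>outcomes S. if \<forall>i\<in>S. x i = z i then r else 0) = r"
proof -
  have "(\<Sum>z\<in>outcomes S. if \<forall>i\<in>S. x i = z i then r else 0) =
      (\<Sum>z\<in>outcomes S. if z = (\<lambda>i. i \<in> S \<and> x i) then r else 0)"
    by (intro sum.cong refl) (auto simp: outcomes_def fun_eq_iff)
  then show ?thesis using finite_outcomes[OF assms] by (simp add: sum.delta' outcomes_def)
qed

lemma PU_sum_outcomes:
  assumes \<rho>: "\<forall>x\<in>basis n. \<forall>y\<in>basis n. \<rho> x y = \<psi> x * cnj (\<psi> y)"
    and \<psi>: "(\<Sum>x\<in>basis n. (cmod (\<psi> x))\<^sup>2) = 1"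
    and S: "S \<subseteq> {1..n}" and U: "\<forall>i\<in>S. Us i \<in> unitary2"
  shows "(\<Sum>z\<in>outcomes S. PU n S \<rho> Us z) = 1"
proof -
  have "finite S" using S finite_subset by blast
  have "(\<Sum>z\<in>outcomes S. PU n S \<rho> Us z) = (\<Sum>x\<in>basis n. (cmod (evolved_amplitude n S Us \<psi> x))\<^sup>2)"
    unfolding PU_eq_sum_evolved_amplitude[OF \<rho>]
    by (subst sum.swap) (simp only: sum_outcomes_agreeing[OF \<open>finite S\<close>])
  then show ?thesis using sum_norm_evolved_amplitude[OF S U] \<psi> by simp
qed

lemma borel_measurable_tensorU_entry:
  assumes "haar_U2 \<mu>"
  shows "(\<lambda>Us. tensorU n S Us x c) \<in> borel_measurable (Ulaw \<mu> S)"
proof -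
  have "(\<lambda>U :: mat2. U a b) \<in> borel_measurable \<mu>" for a b
  proof -
    have "continuous_on UNIV (\<lambda>U :: mat2. U a b)"
      by (rule continuous_on_product_then_coordinatewise[OF continuous_on_product_coordinates])
    then have "(\<lambda>U :: mat2. U a b) \<in> borel_measurable (restrict_space borel unitary2)"
      by (intro measurable_restrict_space1 borel_measurable_continuous_onI)
    moreover have "sets \<mu> = sets (restrict_space borel unitary2)"
      using assms by (simp add: haar_U2_def)
    ultimately show ?thesis by (simp cong: measurable_cong_sets)
  qed
  then have "(\<lambda>Us. Us i a b) \<in> borel_measurable (Ulaw \<mu> S)" if "i \<in> S" for i a b
    unfolding Ulaw_def by (rule measurable_compose[OF measurable_component_singleton[OF that]])
  then show ?thesis unfolding tensorU_def by measurable
qed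

lemma borel_measurable_PU:
  assumes "haar_U2 \<mu>" and "\<forall>x\<in>basis n. \<forall>y\<in>basis n. \<rho> x y = \<psi> x * cnj (\<psi> y)"
  shows "(\<lambda>Us. PU n S \<rho> Us z) \<in> borel_measurable (Ulaw \<mu> S)"
  unfolding PU_eq_sum_evolved_amplitude[OF assms(2)] evolved_amplitude_def
  using borel_measurable_tensorU_entry[OF assms(1)] by measurable

lemma sets_PiM_count_space_finite:
  assumes "finite I" "finite \<Omega>"
  shows "sets (PiM I (\<lambda>_. count_space \<Omega>)) = Pow (PiE I (\<lambda>_. \<Omega>))"
proof
  show "sets (PiM I (\<lambda>_. count_space \<Omega>)) \<subseteq> Pow (PiE I (\<lambda>_. \<Omega>))"
    using sets.sets_into_space[of _ "PiM I (\<lambda>_. count_space \<Omega>)"] by (auto simp: space_PiM)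
  show "Pow (PiE I (\<lambda>_. \<Omega>)) \<subseteq> sets (PiM I (\<lambda>_. count_space \<Omega>))"
  proof
    fix B assume B: "B \<in> Pow (PiE I (\<lambda>_. \<Omega>))"
    have "{x} \<in> sets (PiM I (\<lambda>_. count_space \<Omega>))" if "x \<in> PiE I (\<lambda>_. \<Omega>)" for x
    proof -
      have "PiE I (\<lambda>k. {x k}) \<in> sets (PiM I (\<lambda>_. count_space \<Omega>))"
        using that assms(1) by (intro sets_PiM_I_finite) (auto simp: PiE_iff)
      then show ?thesis using that by (simp add: PiE_singleton PiE_iff)
    qed
    then have "(\<Union>x\<in>B. {x}) \<in> sets (PiM I (\<lambda>_. count_space \<Omega>))"
      using B assms by (intro sets.finite_UN) (auto dest: finite_subset simp: finite_PiE)
    then show "B \<in> sets (PiM I (\<lambda>_. count_space \<Omega>))" by simp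
  qed
qed

lemma PiM_point_measure:
  assumes I: "finite I" and \<Omega>: "finite \<Omega>" and p0: "\<And>z. z \<in> \<Omega> \<Longrightarrow> 0 \<le> p z"
    and p1: "(\<Sum>z\<in>\<Omega>. p z) = 1"
  shows "PiM I (\<lambda>_. point_measure \<Omega> (\<lambda>z. ennreal (p z))) =
    point_measure (PiE I (\<lambda>_. \<Omega>)) (\<lambda>Zs. ennreal (\<Prod>k\<in>I. p (Zs k)))"
proof -
  let ?D = "point_measure \<Omega> (\<lambda>z. ennreal (p z))"
  interpret D: prob_space ?D
    using p0 p1 by (intro prob_space_point_measure \<Omega>) (simp_all add: sum_ennreal)
  interpret P: product_sigma_finite "\<lambda>_. ?D"
    unfolding product_sigma_finite_def using D.sigma_finite_measure_axioms by simp
  have fin: "finite (PiE I (\<lambda>_. \<Omega>))" using I \<Omega> by (simp add: finite_PiE)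
  show ?thesis
  proof (rule measure_eqI_finite[OF _ _ fin])
    show "sets (PiM I (\<lambda>_. ?D)) = Pow (PiE I (\<lambda>_. \<Omega>))"
      using sets_PiM_count_space_finite[OF I \<Omega>] sets_PiM_cong[of I I "\<lambda>_. ?D" "\<lambda>_. count_space \<Omega>"]
      by (simp add: sets_point_measure)
    show "sets (point_measure (PiE I (\<lambda>_. \<Omega>)) (\<lambda>Zs. ennreal (\<Prod>k\<in>I. p (Zs k)))) = Pow (PiE I (\<lambda>_. \<Omega>))"
      by (simp add: sets_point_measure)
  next
    fix x assume x: "x \<in> PiE I (\<lambda>_. \<Omega>)"
    then have "emeasure (PiM I (\<lambda>_. ?D)) {x} = emeasure (PiM I (\<lambda>_. ?D)) (PiE I (\<lambda>k. {x k}))"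
      by (simp add: PiE_singleton PiE_iff)
    also have "\<dots> = (\<Prod>k\<in>I. emeasure ?D {x k})"
      using x by (intro P.emeasure_PiM I) (auto simp: sets_point_measure PiE_iff)
    also have "\<dots> = ennreal (\<Prod>k\<in>I. p (x k))"
      using x \<Omega> p0 by (auto simp: emeasure_point_measure_finite PiE_iff intro!: prod_ennreal)
    also have "\<dots> = emeasure (point_measure (PiE I (\<lambda>_. \<Omega>)) (\<lambda>Zs. ennreal (\<Prod>k\<in>I. p (Zs k)))) {x}"
      using x fin by (simp add: emeasure_point_measure_finite)
    finally show "emeasure (PiM I (\<lambda>_. ?D)) {x} =
        emeasure (point_measure (PiE I (\<lambda>_. \<Omega>)) (\<lambda>Zs. ennreal (\<Prod>k\<in>I. p (Zs k)))) {x}" .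
  qed
qed

locale haar_measurement =
  fixes \<mu> :: "mat2 measure" and n :: nat and S :: "nat set" and \<rho> :: qmat
    and \<psi> :: "(nat \<Rightarrow> bool) \<Rightarrow> complex"
  assumes haar: "haar_U2 \<mu>" and S_subset: "S \<subseteq> {1..n}"
    and \<rho>_eq: "\<forall>x\<in>basis n. \<forall>y\<in>basis n. \<rho> x y = \<psi> x * cnj (\<psi> y)"
    and \<psi>_norm: "(\<Sum>x\<in>basis n. (cmod (\<psi> x))\<^sup>2) = 1"
begin

abbreviation "M \<equiv> Ulaw \<mu> S"
abbreviation "\<Omega> \<equiv> outcomes S"
abbreviation "p Us \<equiv> PU n S \<rho> Us"
abbreviation "outcome_space I \<equiv> PiM I (\<lambda>_. count_space \<Omega>)"

lemma prob_space_M: "prob_space M"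
  using haar unfolding Ulaw_def haar_U2_def by (intro prob_space_PiM) auto

lemma finite_\<Omega>: "finite \<Omega>"
  using S_subset finite_subset finite_outcomes by blast

lemma p_nonneg: "0 \<le> p Us z"
  using PU_nonneg[OF \<rho>_eq] .

lemma sum_p: "Us \<in> space M \<Longrightarrow> (\<Sum>z\<in>\<Omega>. p Us z) = 1"
  using PU_sum_outcomes[OF \<rho>_eq \<psi>_norm S_subset] haar
  by (auto simp: Ulaw_def haar_U2_def space_PiM PiE_iff)

lemma borel_measurable_p [measurable]: "(\<lambda>Us. p Us z) \<in> borel_measurable M"
  using borel_measurable_PU[OF haar \<rho>_eq] .

lemma sum_power_p_bounds:
  assumes "Us \<in> space M" "k \<ge> 1"
  shows "0 \<le> (\<Sum>z\<in>\<Omega>. p Us z ^ k)" "(\<Sum>z\<in>\<Omega>. p Us z ^ k) \<le> 1"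
proof -
  have "p Us z \<le> 1" if "z \<in> \<Omega>" for z
    using member_le_sum[of z \<Omega> "p Us"] p_nonneg sum_p[OF assms(1)] finite_\<Omega> that by auto
  then have "(\<Sum>z\<in>\<Omega>. p Us z ^ k) \<le> (\<Sum>z\<in>\<Omega>. p Us z)"
    using power_decreasing[OF assms(2) p_nonneg] by (intro sum_mono) (metis power_one_right)
  then show "(\<Sum>z\<in>\<Omega>. p Us z ^ k) \<le> 1" using sum_p[OF assms(1)] by simp
  show "0 \<le> (\<Sum>z\<in>\<Omega>. p Us z ^ k)" using p_nonneg by (simp add: sum_nonneg)
qed

lemma integrable_sum_power_p: "k \<ge> 1 \<Longrightarrow> integrable M (\<lambda>Us. (\<Sum>z\<in>\<Omega>. p Us z ^ k) ^ j)"
  using sum_power_p_bounds prob_space.finite_measure[OF prob_space_M]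
  by (intro finite_measure.integrable_const_bound[where B = 1] AE_I2) (auto intro!: power_le_one)

lemma borel_measurable_outcome_space:
  assumes "finite I"
  shows "f \<in> borel_measurable (outcome_space I)"
proof -
  have sets_eq: "sets (outcome_space I) = sets (count_space (PiE I (\<lambda>_. \<Omega>)))"
    using sets_PiM_count_space_finite[OF assms finite_\<Omega>] by simp
  show ?thesis unfolding measurable_cong_sets[OF sets_eq refl] by simp
qed

lemma prob_space_outcome_law: "Us \<in> space M \<Longrightarrow> prob_space (outcome_law n S \<rho> Us)"
  unfolding outcome_law_def point_measure_def[symmetric]
  using p_nonneg sum_p by (intro prob_space_point_measure finite_\<Omega>) (simp_all add: sum_ennreal)

lemma sets_outcomes_law: "sets (PiM I (\<lambda>_. outcome_law n S \<rho> Us)) = sets (outcome_space I)"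
  by (intro sets_PiM_cong) (simp_all add: outcome_law_def)

lemma outcomes_law_eq:
  assumes "finite I" "Us \<in> space M"
  shows "PiM I (\<lambda>_. outcome_law n S \<rho> Us) = point_measure (PiE I (\<lambda>_. \<Omega>)) (\<lambda>Zs. ennreal (\<Prod>k\<in>I. p Us (Zs k)))"
  unfolding outcome_law_def point_measure_def[symmetric]
  using PiM_point_measure[OF assms(1) finite_\<Omega>] p_nonneg sum_p[OF assms(2)] by simp

lemma outcomes_law_measurable:
  assumes I: "finite I"
  shows "(\<lambda>Us. PiM I (\<lambda>_. outcome_law n S \<rho> Us)) \<in> measurable M (subprob_algebra (outcome_space I))"
proof (rule measurable_subprob_algebra)
  fix Us assume "Us \<in> space M"
  then show "subprob_space (PiM I (\<lambda>_. outcome_law n S \<rho> Us))"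
    by (intro prob_space_imp_subprob_space prob_space_PiM prob_space_outcome_law)
  show "sets (PiM I (\<lambda>_. outcome_law n S \<rho> Us)) = sets (outcome_space I)"
    by (rule sets_outcomes_law)
next
  fix A assume A: "A \<in> sets (outcome_space I)"
  then have "A \<subseteq> PiE I (\<lambda>_. \<Omega>)" "finite (PiE I (\<lambda>_. \<Omega>))"
    using sets.sets_into_space[OF A] I finite_\<Omega> by (auto simp: space_PiM finite_PiE)
  then have "emeasure (PiM I (\<lambda>_. outcome_law n S \<rho> Us)) A = (\<Sum>Zs\<in>A. ennreal (\<Prod>k\<in>I. p Us (Zs k)))"
    if "Us \<in> space M" for Us
    by (simp add: outcomes_law_eq[OF I that] emeasure_point_measure_finite)
  then show "(\<lambda>Us. emeasure (PiM I (\<lambda>_. outcome_law n S \<rho> Us)) A) \<in> borel_measurable M"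
    by (subst measurable_cong) auto
qed

lemma integral_joint_law:
  fixes g :: "_ \<Rightarrow> real"
  assumes g: "g \<in> borel_measurable (M \<Otimes>\<^sub>M outcome_space {1..K})" and g_bound: "\<And>\<omega>. \<bar>g \<omega>\<bar> \<le> B"
  shows "integral\<^sup>L (joint_law \<mu> n S \<rho> K) g = (\<integral>Us. iid_expectation {1..K} \<Omega> (p Us) (\<lambda>Zs. g (Us, Zs)) \<partial>M)"
proof -
  let ?kernel = "\<lambda>Us. distr (PiM {1..K} (\<lambda>_. outcome_law n S \<rho> Us))
    (M \<Otimes>\<^sub>M outcome_space {1..K}) (\<lambda>Zs. (Us, Zs))"
  have kernel: "?kernel \<in> measurable M (subprob_algebra (M \<Otimes>\<^sub>M outcome_space {1..K}))"
    using outcomes_law_measurable[of "{1..K}"]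
    by (intro measurable_distr2[where M = "outcome_space {1..K}"]) simp_all
  have "integral\<^sup>L (joint_law \<mu> n S \<rho> K) g = (\<integral>Us. integral\<^sup>L (?kernel Us) g \<partial>M)"
    unfolding joint_law_def
    using g g_bound kernel prob_space.finite_measure[OF prob_space_M]
      subprob_space.emeasure_space_le_1[OF subprob_space_kernel[OF kernel]]
    by (intro integral_bind[where B' = 1]) auto
  also have "\<dots> = (\<integral>Us. iid_expectation {1..K} \<Omega> (p Us) (\<lambda>Zs. g (Us, Zs)) \<partial>M)"
  proof (intro Bochner_Integration.integral_cong refl)
    fix Us assume Us: "Us \<in> space M"
    have "(\<lambda>Zs. (Us, Zs)) \<in> measurable (PiM {1..K} (\<lambda>_. outcome_law n S \<rho> Us)) (M \<Otimes>\<^sub>M outcome_space {1..K})"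
      by (intro measurable_Pair measurable_const measurable_ident_sets sets_outcomes_law Us)
    then have "integral\<^sup>L (?kernel Us) g =
        integral\<^sup>L (PiM {1..K} (\<lambda>_. outcome_law n S \<rho> Us)) (\<lambda>Zs. g (Us, Zs))"
      using g by (rule integral_distr)
    then show "integral\<^sup>L (?kernel Us) g = iid_expectation {1..K} \<Omega> (p Us) (\<lambda>Zs. g (Us, Zs))"
      using p_nonneg finite_\<Omega>
      by (simp add: outcomes_law_eq[OF _ Us] lebesgue_integral_point_measure_finite prod_nonneg
          finite_PiE iid_expectation_def)
  qed
  finally show ?thesis .
qed

lemma borel_measurable_Shat_snd:
  "(\<lambda>\<omega>. f (Shat K (snd \<omega>))) \<in> borel_measurable (M \<Otimes>\<^sub>M outcome_space {1..K})"
  by (rule measurable_compose[OF measurable_snd borel_measurable_outcome_space]) simp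

lemma integral_joint_law_Shat:
  assumes K: "K \<ge> 2"
  shows "(\<integral>\<omega>. Shat K (snd \<omega>) \<partial>joint_law \<mu> n S \<rho> K) = (\<integral>Us. (\<Sum>z\<in>\<Omega>. p Us z ^ 2) \<partial>M)"
proof -
  have "\<bar>Shat K (snd \<omega>)\<bar> \<le> 1" for \<omega>
    using Shat_bounds[OF K, of "snd \<omega>"] by simp
  then show ?thesis
    using borel_measurable_Shat_snd[where f = id] iid_expectation_Shat[OF K finite_\<Omega> sum_p]
    by (subst integral_joint_law[where B = 1]) (auto intro: Bochner_Integration.integral_cong)
qed

lemma integral_joint_law_Shat_centered_square:
  assumes K: "K \<ge> 2"
  shows "(\<integral>\<omega>. (Shat K (snd \<omega>) - m)\<^sup>2 \<partial>joint_law \<mu> n S \<rho> K) =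
    (\<integral>Us. (2 * (\<Sum>z\<in>\<Omega>. p Us z ^ 2) + 4 * (real K - 2) * (\<Sum>z\<in>\<Omega>. p Us z ^ 3)
       + (real K - 2) * (real K - 3) * (\<Sum>z\<in>\<Omega>. p Us z ^ 2)\<^sup>2) / (real K * (real K - 1))
       - 2 * m * (\<Sum>z\<in>\<Omega>. p Us z ^ 2) + m\<^sup>2 \<partial>M)"
proof -
  have "\<bar>(Shat K (snd \<omega>) - m)\<^sup>2\<bar> \<le> (1 + \<bar>m\<bar>)\<^sup>2" for \<omega>
  proof -
    have "\<bar>Shat K (snd \<omega>) - m\<bar> \<le> \<bar>1 + \<bar>m\<bar>\<bar>"
      using Shat_bounds[OF K, of "snd \<omega>"] by linarith
    then have "(Shat K (snd \<omega>) - m)\<^sup>2 \<le> (1 + \<bar>m\<bar>)\<^sup>2" by (simp only: abs_le_square_iff)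
    then show ?thesis by simp
  qed
  then show ?thesis
    using borel_measurable_Shat_snd[where f = "\<lambda>x. (x - m)\<^sup>2"]
      iid_expectation_centered_square[OF _ finite_\<Omega> sum_p] iid_expectation_Shat[OF K finite_\<Omega> sum_p]
      iid_expectation_Shat_square[OF K finite_\<Omega> sum_p]
    by (subst integral_joint_law[where B = "(1 + \<bar>m\<bar>)\<^sup>2"]) (auto intro: Bochner_Integration.integral_cong)
qed

lemma variance_Shat:
  assumes K: "K \<ge> 2"
  defines "P2 \<equiv> \<integral>Us. (\<Sum>z\<in>\<Omega>. p Us z ^ 2) \<partial>M" and "P3 \<equiv> \<integral>Us. (\<Sum>z\<in>\<Omega>. p Us z ^ 3) \<partial>M"
    and "P22 \<equiv> \<integral>Us. (\<Sum>z\<in>\<Omega>. p Us z ^ 2)\<^sup>2 \<partial>M"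
  shows "variance_of (joint_law \<mu> n S \<rho> K) (\<lambda>\<omega>. Shat K (snd \<omega>)) =
    (2 * P2 + 4 * (real K - 2) * P3 + (real K - 2) * (real K - 3) * P22) / (real K * (real K - 1)) - P2\<^sup>2"
proof -
  have "variance_of (joint_law \<mu> n S \<rho> K) (\<lambda>\<omega>. Shat K (snd \<omega>)) =
      (\<integral>\<omega>. (Shat K (snd \<omega>) - P2)\<^sup>2 \<partial>joint_law \<mu> n S \<rho> K)"
    unfolding variance_of_def integral_joint_law_Shat[OF K] P2_def ..
  also have "\<dots> = (2 * P2 + 4 * (real K - 2) * P3 + (real K - 2) * (real K - 3) * P22)
      / (real K * (real K - 1)) - 2 * P2 * P2 + P2\<^sup>2"
  proof -
    let ?N = "real K * (real K - 1)"
    have "(\<integral>\<omega>. (Shat K (snd \<omega>) - P2)\<^sup>2 \<partial>joint_law \<mu> n S \<rho> K) =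
      (\<integral>Us. 2 / ?N * (\<Sum>z\<in>\<Omega>. p Us z ^ 2) + 4 * (real K - 2) / ?N * (\<Sum>z\<in>\<Omega>. p Us z ^ 3)
        + (real K - 2) * (real K - 3) / ?N * (\<Sum>z\<in>\<Omega>. p Us z ^ 2)\<^sup>2
        - 2 * P2 * (\<Sum>z\<in>\<Omega>. p Us z ^ 2) + P2\<^sup>2 \<partial>M)"
      unfolding integral_joint_law_Shat_centered_square[OF K]
      by (intro Bochner_Integration.integral_cong refl) (simp add: add_divide_distrib)
    also have "\<dots> = 2 / ?N * P2 + 4 * (real K - 2) / ?N * P3 + (real K - 2) * (real K - 3) / ?N * P22
        - 2 * P2 * P2 + P2\<^sup>2"
    proof -
      interpret M: prob_space M by (rule prob_space_M)
      show ?thesis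
        using integrable_sum_power_p[of 2 1] integrable_sum_power_p[of 3 1] integrable_sum_power_p[of 2 2]
        by (simp add: P2_def P3_def P22_def M.prob_space)
    qed
    finally show ?thesis by (simp add: add_divide_distrib)
  qed
  finally show ?thesis by (simp add: power2_eq_square)
qed

end

lemma variance_formula_rearranged:
  fixes K P2 P3 P22 :: real
  assumes "K * (K - 1) \<noteq> 0"
  shows "(2 * P2 + 4 * (K - 2) * P3 + (K - 2) * (K - 3) * P22) / (K * (K - 1)) - P2\<^sup>2 =
    (2 * P2 * (1 - P2) + 4 * (K - 2) * (P3 - P2\<^sup>2)) / (K * (K - 1))
    + ((K - 2) * (K - 3) * (P22 - P2\<^sup>2)) / (K * (K - 1))"
  using assms by (simp add: divide_simps) (simp add: algebra_simps power2_eq_square)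

theorem lemma2:
  fixes n K :: nat and S :: "nat set" and \<rho> :: qmat and \<mu> :: "mat2 measure"
  assumes "pure_state n \<rho>"
    and "S \<subseteq> {1..n}" and "S \<noteq> {}"
    and "K \<ge> 2"
    and "haar_U2 \<mu>"
  defines "P2 \<equiv> \<integral>Us. (\<Sum>z\<in>outcomes S. (PU n S \<rho> Us z)^2) \<partial>Ulaw \<mu> S"
    and "P3 \<equiv> \<integral>Us. (\<Sum>z\<in>outcomes S. (PU n S \<rho> Us z)^3) \<partial>Ulaw \<mu> S"
    and "P22 \<equiv> \<integral>Us. (\<Sum>z\<in>outcomes S. (PU n S \<rho> Us z)^2)^2 \<partial>Ulaw \<mu> S"
  shows "variance_of (joint_law \<mu> n S \<rho> K) (\<lambda>\<omega>. Shat K (snd \<omega>)) =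
     (2 * P2 * (1 - P2) + 4 * (real K - 2) * (P3 - P2^2)) / (real K * (real K - 1))
     + ((real K - 2) * (real K - 3) * (P22 - P2^2)) / (real K * (real K - 1))"
proof -
  from assms(1) obtain \<psi> where "(\<Sum>x\<in>basis n. (cmod (\<psi> x))\<^sup>2) = 1"
    and "\<forall>x\<in>basis n. \<forall>y\<in>basis n. \<rho> x y = \<psi> x * cnj (\<psi> y)"
    unfolding pure_state_def by blast
  with assms(2,5) interpret haar_measurement \<mu> n S \<rho> \<psi>
    by unfold_locales
  have "real K * (real K - 1) \<noteq> 0" using assms(4) by simp
  then show ?thesis
    using variance_Shat[OF assms(4)] variance_formula_rearranged
    unfolding P2_def P3_def P22_def by simp
qed

end
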